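(* For every $p\ge0$, $m,n\ge0$ with $m+n\ge1$, and $k_1,\dots,k_m,\ell_1,\dots,\ell_n\ge0$, the open correlator $\langle\tau_{k_1}\cdots\tau_{k_m}\sigma_{\ell_1}\cdots\sigma_{\ell_n}\rangle^o_p$ vanishes unless $$k_1+\dots+k_m+\ell_1+\dots+\ell_n-m-\frac n2=\frac32(p-1).$$ Equivalently, for all $p\ge0$, $\sum_{k\ge0}\big((k-1)t_k\partial_{t_k}+(k-\tfrac12)s_k\partial_{s_k}\big)\mathcal F^o_p=\tfrac32(p-1)\mathcal F^o_p$.
   Context: The Burgers–KdV differential polynomials: $K_0=w$, $R_0=\rho$, $Q_0=w+\frac{\rho^2}2+\frac\epsilon2\rho_x$, $\partial_xK_n=\frac2{2n+1}(w\partial_x+\frac12w_x+\frac{\epsilon^2}8\partial_x^3)K_{n-1}$ (zero integration constant), $R_n=\frac2{2n+1}\big((w+\frac{\rho^2}2+\epsilon(\frac{\rho_x}2+\rho\partial_x)+\frac{\epsilon^2}2\partial_x^2)R_{n-1}+(\frac\rho2+\frac34\epsilon\partial_x)K_{n-1}\big)$, $Q_n=\frac1{n+1}(w+\frac{\rho^2}2+\epsilon(\frac{\rho_x}2+\rho\partial_x)+\frac{\epsilon^2}2\partial_x^2)Q_{n-1}$. Let $(w_{\rm top},\rho_{\rm top})$ solve $\partial_{t_n}w=\partial_xK_n$, $\partial_{t_n}\rho=\partial_xR_n$, $\partial_{s_n}w=0$, $\partial_{s_n}\rho=\partial_xQ_n$ ($t_0=x$) with $(w,\rho)|_{t_n=x\delta_{n,0},s=0}=(x,0)$,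 and let $\log\tau_2=\sum_{p\ge0}\epsilon^{p-1}\mathcal F^o_p(\mathbf t,\mathbf s)$ be defined by $\epsilon\partial_{t_n}\log\tau_2=R_n(w_{\rm top},\rho_{\rm top};\epsilon)$, $\epsilon\partial_{s_n}\log\tau_2=Q_n(w_{\rm top},\rho_{\rm top};\epsilon)$, normalized by $\mathcal F^o_p(\mathbf 0,\mathbf 0)=0$. The open correlators are the Taylor coefficients $\mathcal F^o_p=\sum_{m,n\ge0}\sum_{k_i,\ell_j\ge0}\frac{\langle\tau_{k_1}\cdots\tau_{k_m}\sigma_{\ell_1}\cdots\sigma_{\ell_n}\rangle^o_p}{m!\,n!}t_{k_1}\cdots t_{k_m}s_{\ell_1}\cdots s_{\ell_n}$ (symmetric in the $\tau$'s and in the $\sigma$'s). *)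

theory Defs
  imports Complex_Main "HOL-Library.Poly_Mapping"
begin

text \<open>Jet variables: W i = d^i w / dx^i, Rho i = d^i rho / dx^i, Eps = epsilon.
  Differential polynomials are multivariate polynomials over the rationals,
  represented with HOL-Library.Poly_Mapping.\<close>

datatype dvar = W nat | Rho nat | Eps

type_synonym dpoly = "(dvar \<Rightarrow>\<^sub>0 nat) \<Rightarrow>\<^sub>0 rat"

definition dconst :: "rat \<Rightarrow> dpoly" where
  "dconst c = Poly_Mapping.single 0 c"

definition dvarp :: "dvar \<Rightarrow> dpoly" where
  "dvarp v = Poly_Mapping.single (Poly_Mapping.single v 1) 1"

abbreviation dw :: dpoly where "dw \<equiv> dvarp (W 0)"
abbreviation dwx :: dpoly where "dwx \<equiv> dvarp (W 1)"
abbreviation drho :: dpoly where "drho \<equiv> dvarp (Rho 0)"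
abbreviation drhox :: dpoly where "drhox \<equiv> dvarp (Rho 1)"
abbreviation deps :: dpoly where "deps \<equiv> dvarp Eps"

definition Dv :: "dvar \<Rightarrow> dpoly" where
  "Dv v = (case v of W i \<Rightarrow> dvarp (W (Suc i)) | Rho i \<Rightarrow> dvarp (Rho (Suc i)) | Eps \<Rightarrow> 0)"

definition Dmon :: "(dvar \<Rightarrow>\<^sub>0 nat) \<Rightarrow> dpoly" where
  "Dmon m = (\<Sum>v\<in>Poly_Mapping.keys m.
      Poly_Mapping.single (m - Poly_Mapping.single v 1) (of_nat (Poly_Mapping.lookup m v)) * Dv v)"

definition Dx :: "dpoly \<Rightarrow> dpoly" where
  "Dx p = (\<Sum>m\<in>Poly_Mapping.keys p. dconst (Poly_Mapping.lookup p m) * Dmon m)"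

text \<open>Zero integration constant: no monomial lies in Q[epsilon]
  (i.e. the differential polynomial vanishes at w = rho = 0).\<close>
definition no_const :: "dpoly \<Rightarrow> bool" where
  "no_const p \<longleftrightarrow> (\<forall>m\<in>Poly_Mapping.keys p. \<exists>v\<in>Poly_Mapping.keys m. v \<noteq> Eps)"

definition Lop :: "dpoly \<Rightarrow> dpoly" where
  "Lop P = (dw + dconst (1/2) * drho * drho + dconst (1/2) * deps * drhox) * P
           + deps * drho * Dx P + dconst (1/2) * deps * deps * Dx (Dx P)"

definition is_K_family :: "(nat \<Rightarrow> dpoly) \<Rightarrow> bool" where
  "is_K_family K \<longleftrightarrow> K 0 = dw \<and>
     (\<forall>n. Dx (K (Suc n)) = dconst (2 / (2 * of_nat (Suc n) + 1)) *
          (dw * Dx (K n) + dconst (1/2) * dwx * K n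
           + dconst (1/8) * deps * deps * Dx (Dx (Dx (K n))))
        \<and> no_const (K (Suc n)))"

primrec Rfam :: "(nat \<Rightarrow> dpoly) \<Rightarrow> nat \<Rightarrow> dpoly" where
  "Rfam K 0 = drho"
| "Rfam K (Suc n) = dconst (2 / (2 * of_nat (Suc n) + 1)) *
     (Lop (Rfam K n) + dconst (1/2) * drho * K n + dconst (3/4) * deps * Dx (K n))"

primrec Qfam :: "nat \<Rightarrow> dpoly" where
  "Qfam 0 = dw + dconst (1/2) * drho * drho + dconst (1/2) * deps * drhox"
| "Qfam (Suc n) = dconst (1 / (of_nat (Suc n) + 1)) * Lop (Qfam n)"


datatype svar = E | T nat | S nat

text \<open>A formal power series is its coefficient function on monomials
  (finitely supported exponent vectors).\<close>
type_synonym ser = "(svar \<Rightarrow>\<^sub>0 nat) \<Rightarrow> rat"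

definition sone :: ser where
  "sone = (\<lambda>m. if m = 0 then 1 else 0)"

definition smult :: "ser \<Rightarrow> ser \<Rightarrow> ser" where
  "smult f g = (\<lambda>m. \<Sum>(a, b)\<in>{(a, b). a + b = m}. f a * g b)"

primrec spow :: "ser \<Rightarrow> nat \<Rightarrow> ser" where
  "spow f 0 = sone"
| "spow f (Suc n) = smult f (spow f n)"

definition svarser :: "svar \<Rightarrow> ser" where
  "svarser v = (\<lambda>m. if m = Poly_Mapping.single v 1 then 1 else 0)"

definition sderiv :: "svar \<Rightarrow> ser \<Rightarrow> ser" where
  "sderiv v f = (\<lambda>m. of_nat (Poly_Mapping.lookup m v + 1) * f (m + Poly_Mapping.single v 1))"

definition seval :: "(dvar \<Rightarrow> ser) \<Rightarrow> dpoly \<Rightarrow> ser" where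
  "seval \<sigma> p = (\<lambda>c. \<Sum>m\<in>Poly_Mapping.keys p. Poly_Mapping.lookup p m *
      Finite_Set.fold (\<lambda>v acc. smult (spow (\<sigma> v) (Poly_Mapping.lookup m v)) acc) sone (Poly_Mapping.keys m) c)"

text \<open>Jets of (w, rho) with x = t_0, and eps substituted by the formal variable E.\<close>
definition jet :: "ser \<Rightarrow> ser \<Rightarrow> dvar \<Rightarrow> ser" where
  "jet w rho v = (case v of W i \<Rightarrow> (sderiv (T 0) ^^ i) w
                          | Rho i \<Rightarrow> (sderiv (T 0) ^^ i) rho
                          | Eps \<Rightarrow> svarser E)"

definition is_top_solution :: "(nat \<Rightarrow> dpoly) \<Rightarrow> ser \<Rightarrow> ser \<Rightarrow> bool" where
  "is_top_solution K w rho \<longleftrightarrow>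
     (\<forall>n. sderiv (T n) w = sderiv (T 0) (seval (jet w rho) (K n))) \<and>
     (\<forall>n. sderiv (T n) rho = sderiv (T 0) (seval (jet w rho) (Rfam K n))) \<and>
     (\<forall>n. sderiv (S n) w = (\<lambda>_. 0)) \<and>
     (\<forall>n. sderiv (S n) rho = sderiv (T 0) (seval (jet w rho) (Qfam n))) \<and>
     (\<forall>m. (\<forall>n. Poly_Mapping.lookup m (T (Suc n)) = 0) \<and> (\<forall>n. Poly_Mapping.lookup m (S n) = 0) \<longrightarrow>
          w m = (if m = Poly_Mapping.single (T 0) 1 then 1 else 0) \<and> rho m = 0)"

text \<open>G = eps log tau_2 = sum_p eps^p F^o_p, characterised by
  d_{t_n} G = R_n, d_{s_n} G = Q_n and F^o_p(0,0) = 0.\<close>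
definition is_eps_log_tau2 :: "(nat \<Rightarrow> dpoly) \<Rightarrow> ser \<Rightarrow> ser \<Rightarrow> ser \<Rightarrow> bool" where
  "is_eps_log_tau2 K w rho G \<longleftrightarrow>
     (\<forall>n. sderiv (T n) G = seval (jet w rho) (Rfam K n)) \<and>
     (\<forall>n. sderiv (S n) G = seval (jet w rho) (Qfam n)) \<and>
     (\<forall>p. G (Poly_Mapping.single E p) = 0)"

definition open_corr :: "ser \<Rightarrow> nat \<Rightarrow> nat list \<Rightarrow> nat list \<Rightarrow> rat" where
  "open_corr G p ks ls =
     G (Poly_Mapping.single E p + (\<Sum>k\<leftarrow>ks. Poly_Mapping.single (T k) 1)
                                 + (\<Sum>l\<leftarrow>ls. Poly_Mapping.single (S l) 1))
     * (\<Prod>k\<in>set ks. of_nat (fact (count_list ks k)))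
     * (\<Prod>l\<in>set ls. of_nat (fact (count_list ls l)))"

end

theory Submission
  imports Defs
begin

text \<open>Give the formal variables the weights \<open>eps \<mapsto> -3\<close>, \<open>t_k \<mapsto> 2k - 2\<close>,
  \<open>s_l \<mapsto> 2l - 1\<close> and the jet variables \<open>w^(i) \<mapsto> 2i - 2\<close>, \<open>rho^(i) \<mapsto> 2i - 1\<close>,
  \<open>eps \<mapsto> -3\<close>. Then \<open>Q_n\<close> and \<open>R_n\<close> are homogeneous of weights \<open>-2 - 2n\<close> and
  \<open>-1 - 2n\<close>, and so is \<open>K_n\<close> of weight \<open>-2 - 2n\<close>: its x-derivative is homogeneous, and
  the x-derivative raises weights by 2 and kills only polynomials in eps. The flow
  equations express every coefficient of \<open>w\<close> and \<open>rho\<close> containing a higher time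
  \<open>t_(k+1)\<close> or \<open>s_l\<close> through coefficients with one higher time less, and the initial
  data \<open>w = t_0\<close>, \<open>rho = 0\<close> are homogeneous; by induction on the number of higher times,
  \<open>w\<close> and \<open>rho\<close> are homogeneous of weights -2 and -1. The same argument applied once
  more shows that \<open>eps log tau_2\<close> is homogeneous of weight -3, and the weight of the
  monomial \<open>eps^p t_k1 ... t_km s_l1 ... s_ln\<close> is \<open>-3p + \<Sum>(2k_i - 2) + \<Sum>(2l_j - 1)\<close>.\<close>

section \<open>Weighted homogeneous polynomials\<close>

definition mon_weight :: "('v \<Rightarrow> 'a::comm_semiring_1) \<Rightarrow> ('v \<Rightarrow>\<^sub>0 nat) \<Rightarrow> 'a" where
  "mon_weight wt m = (\<Sum>v\<in>Poly_Mapping.keys m. of_nat (Poly_Mapping.lookup m v) * wt v)"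

lemma mon_weight_superset:
  assumes "finite A" "Poly_Mapping.keys m \<subseteq> A"
  shows "mon_weight wt m = (\<Sum>v\<in>A. of_nat (Poly_Mapping.lookup m v) * wt v)"
  unfolding mon_weight_def
  by (rule sum.mono_neutral_left) (use assms in \<open>auto simp: in_keys_iff\<close>)

lemma mon_weight_add: "mon_weight wt (a + b) = mon_weight wt a + mon_weight wt b"
proof -
  let ?A = "Poly_Mapping.keys a \<union> Poly_Mapping.keys b"
  have "mon_weight wt (a + b) = (\<Sum>v\<in>?A. of_nat (Poly_Mapping.lookup (a + b) v) * wt v)"
    by (rule mon_weight_superset) (auto dest: keys_add[THEN subsetD])
  also have "\<dots> = mon_weight wt a + mon_weight wt b"
    by (simp add: mon_weight_superset[where A = ?A] lookup_add sum.distrib algebra_simps)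
  finally show ?thesis .
qed

lemma mon_weight_zero [simp]: "mon_weight wt 0 = 0"
  by (simp add: mon_weight_def)

lemma mon_weight_single [simp]: "mon_weight wt (Poly_Mapping.single v n) = of_nat n * wt v"
  by (cases "n = 0") (simp_all add: mon_weight_def)

lemma mon_weight_sum_list: "mon_weight wt (\<Sum>x\<leftarrow>xs. f x) = (\<Sum>x\<leftarrow>xs. mon_weight wt (f x))"
  by (induction xs) (simp_all add: mon_weight_add)

lemma diff_single_add_cancel:
  fixes m :: "'v \<Rightarrow>\<^sub>0 nat"
  assumes "v \<in> Poly_Mapping.keys m"
  shows "m - Poly_Mapping.single v 1 + Poly_Mapping.single v 1 = m"
  using assms
  by (intro poly_mapping_eqI) (auto simp: in_keys_iff lookup_add lookup_minus lookup_single when_def)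

lemma mon_weight_diff_single:
  assumes "v \<in> Poly_Mapping.keys m"
  shows "mon_weight wt (m - Poly_Mapping.single v 1) = mon_weight wt m - (wt v :: 'a::comm_ring_1)"
  using mon_weight_add[of wt "m - Poly_Mapping.single v 1" "Poly_Mapping.single v 1"]
  unfolding diff_single_add_cancel[OF assms] by simp

definition weighted_homogeneous ::
    "('v \<Rightarrow> int) \<Rightarrow> int \<Rightarrow> (('v \<Rightarrow>\<^sub>0 nat) \<Rightarrow>\<^sub>0 'a::comm_semiring_1) \<Rightarrow> bool" where
  "weighted_homogeneous wt d P \<longleftrightarrow> (\<forall>m\<in>Poly_Mapping.keys P. mon_weight wt m = d)"

lemma weighted_homogeneous_single: "weighted_homogeneous wt (mon_weight wt m) (Poly_Mapping.single m c)"
  by (simp add: weighted_homogeneous_def)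

lemma weighted_homogeneous_add:
  "weighted_homogeneous wt d P \<Longrightarrow> weighted_homogeneous wt d Q \<Longrightarrow> weighted_homogeneous wt d (P + Q)"
  unfolding weighted_homogeneous_def using keys_add[of P Q] by blast

lemma weighted_homogeneous_diff:
  fixes P Q :: "('v \<Rightarrow>\<^sub>0 nat) \<Rightarrow>\<^sub>0 'a::comm_ring_1"
  shows "weighted_homogeneous wt d P \<Longrightarrow> weighted_homogeneous wt d Q \<Longrightarrow> weighted_homogeneous wt d (P - Q)"
  unfolding weighted_homogeneous_def using keys_diff[of P Q] by blast

lemma weighted_homogeneous_mult:
  assumes "weighted_homogeneous wt d1 P" "weighted_homogeneous wt d2 Q"
  shows "weighted_homogeneous wt (d1 + d2) (P * Q)"
  using assms keys_mult[of P Q] unfolding weighted_homogeneous_def by (force simp: mon_weight_add)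

lemma weighted_homogeneous_multI:
  "weighted_homogeneous wt d1 P \<Longrightarrow> weighted_homogeneous wt d2 Q \<Longrightarrow> d = d1 + d2 \<Longrightarrow>
    weighted_homogeneous wt d (P * Q)"
  by (simp add: weighted_homogeneous_mult)

section \<open>Weights of jet variables and the x-derivative\<close>

fun dweight :: "dvar \<Rightarrow> int" where
  "dweight (W i) = 2 * int i - 2"
| "dweight (Rho i) = 2 * int i - 1"
| "dweight Eps = -3"

abbreviation dhomog :: "int \<Rightarrow> dpoly \<Rightarrow> bool" where
  "dhomog \<equiv> weighted_homogeneous dweight"

lemma dhomog_dconst: "dhomog 0 (dconst c)"
  unfolding dconst_def using weighted_homogeneous_single[of dweight 0 c] by simp

lemma dhomog_dvarp: "dhomog (dweight v) (dvarp v)"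
  unfolding dvarp_def using weighted_homogeneous_single[of dweight "Poly_Mapping.single v 1" 1] by simp

fun jet_shift :: "dvar \<Rightarrow> dvar" where
  "jet_shift (W i) = W (Suc i)"
| "jet_shift (Rho i) = Rho (Suc i)"
| "jet_shift Eps = Eps"

lemma dweight_jet_shift: "v \<noteq> Eps \<Longrightarrow> dweight (jet_shift v) = dweight v + 2"
  by (cases v) auto

lemma jet_shift_inject: "u \<noteq> Eps \<Longrightarrow> v \<noteq> Eps \<Longrightarrow> jet_shift u = jet_shift v \<longleftrightarrow> u = v"
  by (cases u; cases v) auto

lemma jet_shift_not_Eps: "v \<noteq> Eps \<Longrightarrow> jet_shift v \<noteq> Eps"
  by (cases v) auto

lemma lookup_dconst_mult: "Poly_Mapping.lookup (dconst c * P) m = c * Poly_Mapping.lookup P m"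
  unfolding dconst_def mult_map_scale_conv_mult[symmetric]
  by (simp add: Poly_Mapping.map.rep_eq when_def)

lemma lookup_Dx:
  "Poly_Mapping.lookup (Dx P) t =
     (\<Sum>m\<in>Poly_Mapping.keys P. Poly_Mapping.lookup P m *
       (\<Sum>u\<in>Poly_Mapping.keys m.
          if u \<noteq> Eps \<and> t = m - Poly_Mapping.single u 1 + Poly_Mapping.single (jet_shift u) 1
          then of_nat (Poly_Mapping.lookup m u) else 0))"
proof -
  have "Poly_Mapping.lookup (Poly_Mapping.single (m - Poly_Mapping.single u 1) c * Dv u) t =
          (if u \<noteq> Eps \<and> t = m - Poly_Mapping.single u 1 + Poly_Mapping.single (jet_shift u) 1
           then c else 0)" for m u c
    by (cases u) (auto simp: Dv_def dvarp_def mult_single lookup_single when_def)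
  then show ?thesis
    unfolding Dx_def Dmon_def by (simp only: lookup_sum lookup_dconst_mult)
qed

lemma Dx_superset:
  assumes "finite A" "Poly_Mapping.keys P \<subseteq> A"
  shows "Dx P = (\<Sum>m\<in>A. dconst (Poly_Mapping.lookup P m) * Dmon m)"
  unfolding Dx_def
  by (rule sum.mono_neutral_left) (use assms in \<open>auto simp: in_keys_iff dconst_def\<close>)

lemma Dx_add: "Dx (P + Q) = Dx P + Dx Q"
proof -
  let ?A = "Poly_Mapping.keys P \<union> Poly_Mapping.keys Q"
  have "dconst (a + b) = dconst a + dconst b" for a b
    by (simp add: dconst_def single_add)
  moreover have "Dx R = (\<Sum>m\<in>?A. dconst (Poly_Mapping.lookup R m) * Dmon m)" if "R \<in> {P, Q, P + Q}" for R
    by (rule Dx_superset) (use that keys_add[of P Q] in auto)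
  ultimately show ?thesis
    by (simp add: lookup_add sum.distrib distrib_right)
qed

lemma keys_Dx_weight:
  assumes "t \<in> Poly_Mapping.keys (Dx P)"
  obtains m where "m \<in> Poly_Mapping.keys P" "mon_weight dweight t = mon_weight dweight m + 2"
proof -
  from assms obtain m u where m: "m \<in> Poly_Mapping.keys P" and u: "u \<in> Poly_Mapping.keys m"
    and "u \<noteq> Eps" and t: "t = m - Poly_Mapping.single u 1 + Poly_Mapping.single (jet_shift u) 1"
    unfolding in_keys_iff lookup_Dx
    by (auto elim!: sum.not_neutral_contains_not_neutral split: if_splits)
  then have "mon_weight dweight t = mon_weight dweight m + 2"
    using mon_weight_diff_single[OF u, of dweight] by (simp add: mon_weight_add dweight_jet_shift)
  with m show thesis by (rule that)
qed

lemma dhomog_Dx: "dhomog d P \<Longrightarrow> dhomog (d + 2) (Dx P)"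
  unfolding weighted_homogeneous_def by (metis keys_Dx_weight)

definition top_weight :: "(dvar \<Rightarrow>\<^sub>0 nat) \<Rightarrow> int" where
  "top_weight m = Max (dweight ` (Poly_Mapping.keys m - {Eps}))"

lemma dweight_le_top_weight: "v \<in> Poly_Mapping.keys m \<Longrightarrow> v \<noteq> Eps \<Longrightarrow> dweight v \<le> top_weight m"
  unfolding top_weight_def by (rule Max_ge) auto

text \<open>If \<open>v\<close> has weight at least the top weight of every monomial of \<open>P\<close>, then
  \<open>jet_shift v\<close> occurs in no monomial of \<open>P\<close>; so in a shifted monomial it can only be the
  newly created variable, which identifies both the monomial and the shifted variable.\<close>

lemma shifted_monomial_unique:
  assumes top: "\<And>m''. m'' \<in> Poly_Mapping.keys P \<Longrightarrow> top_weight m'' \<le> dweight v"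
    and v: "v \<in> Poly_Mapping.keys m" "v \<noteq> Eps" and u: "u \<in> Poly_Mapping.keys m'" "u \<noteq> Eps"
    and mP: "m \<in> Poly_Mapping.keys P" and m'P: "m' \<in> Poly_Mapping.keys P"
    and eq: "m' - Poly_Mapping.single u 1 + Poly_Mapping.single (jet_shift u) 1 =
             m - Poly_Mapping.single v 1 + Poly_Mapping.single (jet_shift v) 1"
  shows "m' = m \<and> u = v"
proof -
  have lookup_shift: "Poly_Mapping.lookup (n - Poly_Mapping.single x 1 + Poly_Mapping.single (jet_shift x) 1)
      (jet_shift v) = (if jet_shift x = jet_shift v then 1 else 0)" if "n \<in> Poly_Mapping.keys P" for n x
  proof -
    have "jet_shift v \<notin> Poly_Mapping.keys n"
    proof
      assume "jet_shift v \<in> Poly_Mapping.keys n"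
      then have "dweight (jet_shift v) \<le> top_weight n"
        using jet_shift_not_Eps[OF v(2)] by (rule dweight_le_top_weight)
      with top[OF that] dweight_jet_shift[OF v(2)] show False by linarith
    qed
    then show ?thesis
      by (simp add: lookup_add lookup_minus lookup_single in_keys_iff when_def)
  qed
  have "(if jet_shift u = jet_shift v then 1 else 0 :: nat) = 1"
    using lookup_shift[OF m'P, of u] lookup_shift[OF mP, of v] unfolding eq by simp
  then have "u = v"
    using jet_shift_inject[OF u(2) v(2)] by (simp split: if_splits)
  with eq have "m' - Poly_Mapping.single v 1 = m - Poly_Mapping.single v 1"
    by simp
  then have "m' = m"
    using diff_single_add_cancel[OF v(1)] diff_single_add_cancel[of v m'] u(1) \<open>u = v\<close> by metis
  with \<open>u = v\<close> show ?thesis by blast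
qed

lemma lookup_Dx_shifted_top:
  assumes top: "\<And>m''. m'' \<in> Poly_Mapping.keys P \<Longrightarrow> top_weight m'' \<le> dweight v"
    and mP: "m \<in> Poly_Mapping.keys P" and v: "v \<in> Poly_Mapping.keys m" "v \<noteq> Eps"
  shows "Poly_Mapping.lookup (Dx P) (m - Poly_Mapping.single v 1 + Poly_Mapping.single (jet_shift v) 1)
    = Poly_Mapping.lookup P m * of_nat (Poly_Mapping.lookup m v)"
    (is "Poly_Mapping.lookup (Dx P) ?t = _")
proof -
  have hit: "u \<noteq> Eps \<and> ?t = m' - Poly_Mapping.single u 1 + Poly_Mapping.single (jet_shift u) 1
      \<longleftrightarrow> m' = m \<and> u = v"
    if "m' \<in> Poly_Mapping.keys P" "u \<in> Poly_Mapping.keys m'" for m' u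
    using shifted_monomial_unique[OF top v _ _ mP, of u m'] that v(2) by auto
  have "Poly_Mapping.lookup (Dx P) ?t =
      (\<Sum>m'\<in>Poly_Mapping.keys P. Poly_Mapping.lookup P m' *
         (\<Sum>u\<in>Poly_Mapping.keys m'. if m' = m \<and> u = v then of_nat (Poly_Mapping.lookup m v) else 0))"
    unfolding lookup_Dx
    by (rule sum.cong[OF refl], rule arg_cong[where f = "(*) _"], rule sum.cong[OF refl],
        rule if_cong[OF hit]) simp_all
  also have "\<dots> = (\<Sum>m'\<in>Poly_Mapping.keys P.
      if m' = m then Poly_Mapping.lookup P m * of_nat (Poly_Mapping.lookup m v) else 0)"
    by (rule sum.cong[OF refl]) (use v(1) in auto)
  also have "\<dots> = Poly_Mapping.lookup P m * of_nat (Poly_Mapping.lookup m v)"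
    using mP by simp
  finally show ?thesis .
qed

lemma Dx_eq_0_imp_eq_0:
  assumes "no_const P" and "Dx P = 0"
  shows "P = 0"
proof (rule ccontr)
  assume "P \<noteq> 0"
  define M where "M = Max (top_weight ` Poly_Mapping.keys P)"
  have "M \<in> top_weight ` Poly_Mapping.keys P"
    unfolding M_def using \<open>P \<noteq> 0\<close> by (intro Max_in) auto
  then obtain m where m: "m \<in> Poly_Mapping.keys P" "top_weight m = M" by auto
  have "Poly_Mapping.keys m - {Eps} \<noteq> {}"
    using assms(1) m(1) by (auto simp: no_const_def)
  then have "top_weight m \<in> dweight ` (Poly_Mapping.keys m - {Eps})"
    unfolding top_weight_def by (intro Max_in) auto
  then obtain v where "top_weight m = dweight v" "v \<in> Poly_Mapping.keys m - {Eps}"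
    by (rule imageE)
  then have v: "v \<in> Poly_Mapping.keys m" "v \<noteq> Eps" "dweight v = M"
    using m(2) by simp_all
  have "top_weight m' \<le> dweight v" if "m' \<in> Poly_Mapping.keys P" for m'
    unfolding v(3) M_def using that by (intro Max_ge) auto
  then have "Poly_Mapping.lookup (Dx P) (m - Poly_Mapping.single v 1 + Poly_Mapping.single (jet_shift v) 1)
      = Poly_Mapping.lookup P m * of_nat (Poly_Mapping.lookup m v)"
    using m(1) v(1,2) by (rule lookup_Dx_shifted_top)
  then have "Poly_Mapping.lookup (Dx P) (m - Poly_Mapping.single v 1 + Poly_Mapping.single (jet_shift v) 1) \<noteq> 0"
    using m(1) v(1) by (simp add: in_keys_iff)
  with assms(2) show False by simp
qed

lemma dhomog_of_Dx:
  assumes "no_const P" and "dhomog (d + 2) (Dx P)"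
  shows "dhomog d P"
proof -
  define Q where "Q = Poly_Mapping.mapp (\<lambda>m c. c when mon_weight dweight m \<noteq> d) P"
  define R where "R = Poly_Mapping.mapp (\<lambda>m c. c when mon_weight dweight m = d) P"
  have PQR: "P = Q + R"
    unfolding Q_def R_def by (rule poly_mapping_eqI) (auto simp: lookup_add lookup_mapp when_def in_keys_iff)
  have keys_Q: "Poly_Mapping.keys Q \<subseteq> Poly_Mapping.keys P"
    unfolding Q_def by (rule keys_mapp_subset)
  have "dhomog d R"
    unfolding R_def weighted_homogeneous_def by (auto simp: in_keys_iff lookup_mapp)
  then have "dhomog (d + 2) (Dx P - Dx R)"
    by (intro weighted_homogeneous_diff assms(2) dhomog_Dx)
  then have "dhomog (d + 2) (Dx Q)"
    using PQR by (simp add: Dx_add)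
  moreover have "mon_weight dweight t \<noteq> d + 2" if "t \<in> Poly_Mapping.keys (Dx Q)" for t
    using that by (elim keys_Dx_weight) (auto simp: Q_def in_keys_iff lookup_mapp)
  ultimately have "Dx Q = 0"
    unfolding weighted_homogeneous_def by auto
  moreover have "no_const Q"
    using assms(1) keys_Q unfolding no_const_def by blast
  ultimately have "Q = 0"
    by (rule Dx_eq_0_imp_eq_0[rotated])
  show ?thesis
    unfolding weighted_homogeneous_def
  proof
    fix m assume m: "m \<in> Poly_Mapping.keys P"
    show "mon_weight dweight m = d"
    proof (rule ccontr)
      assume "mon_weight dweight m \<noteq> d"
      then have "Poly_Mapping.lookup Q m = Poly_Mapping.lookup P m"
        using m by (simp add: Q_def lookup_mapp)
      with \<open>Q = 0\<close> m show False by (simp add: in_keys_iff)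
    qed
  qed
qed

section \<open>Homogeneity of the Burgers--KdV differential polynomials\<close>

lemma dhomog_dvarpI: "d = dweight v \<Longrightarrow> dhomog d (dvarp v)"
  using dhomog_dvarp by simp

lemmas dhomog_intros =
  weighted_homogeneous_add weighted_homogeneous_multI dhomog_dvarp dhomog_dvarpI dhomog_dconst dhomog_Dx

lemma dhomog_Lop: "dhomog d P \<Longrightarrow> dhomog (d - 2) (Lop P)"
  unfolding Lop_def by (rule dhomog_intros | assumption | simp)+

lemma dhomog_Qfam: "dhomog (-2 - 2 * int n) (Qfam n)"
proof (induction n)
  case 0
  show ?case by (simp only: Qfam.simps) (rule dhomog_intros | simp)+
next
  case (Suc n)
  then show ?case by (simp only: Qfam.simps) (rule dhomog_intros dhomog_Lop Suc.IH | simp)+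
qed

lemma dhomog_K:
  assumes "is_K_family K"
  shows "dhomog (-2 - 2 * int n) (K n)"
proof (induction n)
  case 0
  then show ?case using assms dhomog_dvarp[of "W 0"] by (simp add: is_K_family_def)
next
  case (Suc n)
  from assms have Dx_K: "Dx (K (Suc n)) = dconst (2 / (2 * of_nat (Suc n) + 1)) *
      (dw * Dx (K n) + dconst (1/2) * dwx * K n + dconst (1/8) * deps * deps * Dx (Dx (Dx (K n))))"
    and "no_const (K (Suc n))"
    unfolding is_K_family_def by blast+
  have "dhomog (-2 - 2 * int (Suc n) + 2) (Dx (K (Suc n)))"
    unfolding Dx_K by (rule dhomog_intros Suc.IH | simp)+
  with \<open>no_const (K (Suc n))\<close> show ?case by (rule dhomog_of_Dx)
qed

lemma dhomog_Rfam:
  assumes "\<And>n. dhomog (-2 - 2 * int n) (K n)"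
  shows "dhomog (-1 - 2 * int n) (Rfam K n)"
proof (induction n)
  case 0
  show ?case using dhomog_dvarp[of "Rho 0"] by simp
next
  case (Suc n)
  show ?case by (simp only: Rfam.simps) (rule dhomog_intros dhomog_Lop Suc.IH assms | simp)+
qed

lemma finite_lookup_bounded: "finite {a :: 'v \<Rightarrow>\<^sub>0 nat. \<forall>v. Poly_Mapping.lookup a v \<le> Poly_Mapping.lookup c v}"
  (is "finite ?A")
proof -
  let ?B = "\<Union>w\<in>Poly_Mapping.keys c. {..Poly_Mapping.lookup c w}"
  let ?F = "{f. \<forall>v. (v \<in> Poly_Mapping.keys c \<longrightarrow> f v \<in> ?B) \<and> (v \<notin> Poly_Mapping.keys c \<longrightarrow> f v = 0)}"
  have "Poly_Mapping.lookup a \<in> ?F" if "a \<in> ?A" for a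
  proof -
    have le: "Poly_Mapping.lookup a v \<le> Poly_Mapping.lookup c v" for v
      using that by simp
    have "Poly_Mapping.lookup a v \<in> ?B" if "v \<in> Poly_Mapping.keys c" for v
      using that le[of v] by (intro UN_I[of v]) auto
    moreover have "Poly_Mapping.lookup a v = 0" if "v \<notin> Poly_Mapping.keys c" for v
      using that le[of v] by (simp add: in_keys_iff)
    ultimately show ?thesis
      by blast
  qed
  then have "Poly_Mapping.lookup ` ?A \<subseteq> ?F"
    by (rule image_subsetI)
  moreover have "finite ?F"
    by (rule finite_set_of_finite_funs) simp_all
  ultimately have "finite (Poly_Mapping.lookup ` ?A)"
    by (rule finite_subset)
  then show ?thesis
    by (rule finite_imageD) (auto intro: inj_onI poly_mapping_eqI)
qed

lemma finite_add_decompositions: "finite {(a, b). a + b = (c :: 'v \<Rightarrow>\<^sub>0 nat)}"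
proof (rule finite_subset)
  let ?A = "{a :: 'v \<Rightarrow>\<^sub>0 nat. \<forall>v. Poly_Mapping.lookup a v \<le> Poly_Mapping.lookup c v}"
  show "{(a, b). a + b = c} \<subseteq> ?A \<times> ?A"
    by (auto simp: lookup_add)
  show "finite (?A \<times> ?A)"
    by (intro finite_cartesian_product finite_lookup_bounded)
qed

lemma smult_alt: "smult f g c = (\<Sum>ab\<in>{(a, b). a + b = c}. f (fst ab) * g (snd ab))"
  by (simp add: smult_def case_prod_unfold)

lemma smult_commute: "smult f g = smult g f"
  unfolding smult_def
  by (rule ext, rule sum.reindex_bij_witness[where i = "\<lambda>(a, b). (b, a)" and j = "\<lambda>(a, b). (b, a)"])
     (auto simp: add.commute mult.commute)

lemma smult_assoc: "smult f (smult g h) = smult (smult f g) h"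
proof
  fix c
  let ?P = "\<lambda>c. {(a, b). a + b = (c :: svar \<Rightarrow>\<^sub>0 nat)}"
  have "smult f (smult g h) c =
      (\<Sum>ab\<in>?P c. \<Sum>xy\<in>?P (snd ab). f (fst ab) * (g (fst xy) * h (snd xy)))"
    unfolding smult_alt by (simp add: sum_distrib_left)
  also have "\<dots> = (\<Sum>(ab, xy)\<in>Sigma (?P c) (\<lambda>ab. ?P (snd ab)). f (fst ab) * (g (fst xy) * h (snd xy)))"
    by (rule sum.Sigma) (auto simp: finite_add_decompositions)
  also have "\<dots> = (\<Sum>(ba, xy)\<in>Sigma (?P c) (\<lambda>ba. ?P (fst ba)). f (fst xy) * (g (snd xy) * h (snd ba)))"
    by (rule sum.reindex_bij_witness[where i = "\<lambda>((b, y), (a, x)). ((a, x + y), (x, y))"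
                                     and j = "\<lambda>((a, b), (x, y)). ((a + x, y), (a, x))"])
       (auto simp: add.assoc)
  also have "\<dots> = (\<Sum>ba\<in>?P c. \<Sum>xy\<in>?P (fst ba). f (fst xy) * (g (snd xy) * h (snd ba)))"
    by (rule sum.Sigma[symmetric]) (auto simp: finite_add_decompositions)
  also have "\<dots> = smult (smult f g) h c"
    unfolding smult_alt by (simp add: sum_distrib_right mult.assoc)
  finally show "smult f (smult g h) c = smult (smult f g) h c" .
qed

lemma smult_left_commute: "smult f (smult g h) = smult g (smult f h)"
  by (metis smult_assoc smult_commute)

section \<open>Homogeneity of the topological solution and of eps log tau_2\<close>

fun sweight :: "svar \<Rightarrow> int" where
  "sweight E = -3"
| "sweight (T k) = 2 * int k - 2"
| "sweight (S l) = 2 * int l - 1"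

fun higher_time :: "svar \<Rightarrow> nat" where
  "higher_time E = 0"
| "higher_time (T k) = (if k = 0 then 0 else 1)"
| "higher_time (S l) = 1"

text \<open>Homogeneity restricted to monomials with fewer than \<open>D\<close> higher times: this is the
  invariant of the induction driven by the flow equations.\<close>

definition homog_below :: "nat \<Rightarrow> int \<Rightarrow> ser \<Rightarrow> bool" where
  "homog_below D d f \<longleftrightarrow>
     (\<forall>a. mon_weight higher_time a < D \<longrightarrow> f a \<noteq> 0 \<longrightarrow> mon_weight sweight a = d)"

lemma homog_below_smult:
  assumes "homog_below D d1 f" "homog_below D d2 g"
  shows "homog_below D (d1 + d2) (smult f g)"
  unfolding homog_below_def
proof (intro allI impI)
  fix c assume c: "mon_weight higher_time c < D" "smult f g c \<noteq> 0"
  then obtain a b where "a + b = c" "f a * g b \<noteq> 0"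
    unfolding smult_def by (auto elim!: sum.not_neutral_contains_not_neutral)
  moreover have "mon_weight higher_time a < D" "mon_weight higher_time b < D"
    using c(1) \<open>a + b = c\<close> by (auto simp: mon_weight_add)
  ultimately show "mon_weight sweight c = d1 + d2"
    using assms unfolding homog_below_def by (auto simp: mon_weight_add)
qed

lemma homog_below_sone: "homog_below D 0 sone"
  by (simp add: homog_below_def sone_def)

lemma homog_below_spow: "homog_below D d f \<Longrightarrow> homog_below D (int n * d) (spow f n)"
  by (induction n) (simp_all add: homog_below_sone homog_below_smult algebra_simps)

lemma homog_below_fold_spow:
  assumes "finite A" "\<And>v. v \<in> A \<Longrightarrow> homog_below D (wt v) (\<sigma> v)"
  shows "homog_below D (\<Sum>v\<in>A. int (e v) * wt v)
           (Finite_Set.fold (\<lambda>v acc. smult (spow (\<sigma> v) (e v)) acc) sone A)"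
proof -
  interpret comp_fun_commute "\<lambda>v acc. smult (spow (\<sigma> v) (e v)) acc"
    by unfold_locales (auto simp: fun_eq_iff smult_left_commute)
  show ?thesis
    using assms by (induction A rule: finite_induct) (simp_all add: homog_below_sone homog_below_smult homog_below_spow)
qed

lemma homog_below_seval:
  assumes "dhomog d P" "\<And>v. homog_below D (dweight v) (\<sigma> v)"
  shows "homog_below D d (seval \<sigma> P)"
  unfolding homog_below_def
proof (intro allI impI)
  let ?mon = "\<lambda>m. Finite_Set.fold (\<lambda>v acc. smult (spow (\<sigma> v) (Poly_Mapping.lookup m v)) acc) sone
    (Poly_Mapping.keys m)"
  fix c assume c: "mon_weight higher_time c < D" "seval \<sigma> P c \<noteq> 0"
  then obtain m where m: "m \<in> Poly_Mapping.keys P" "?mon m c \<noteq> 0"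
    unfolding seval_def by (auto elim!: sum.not_neutral_contains_not_neutral)
  have "homog_below D (mon_weight dweight m) (?mon m)"
    unfolding mon_weight_def by (rule homog_below_fold_spow) (simp_all add: assms(2))
  then have "mon_weight sweight c = mon_weight dweight m"
    using m(2) c(1) unfolding homog_below_def by blast
  with assms(1) m(1) show "mon_weight sweight c = d"
    unfolding weighted_homogeneous_def by simp
qed

lemma homog_below_sderiv_T0:
  assumes "homog_below D d f"
  shows "homog_below D (d + 2) (sderiv (T 0) f)"
  unfolding homog_below_def
proof (intro allI impI)
  fix a assume a: "mon_weight higher_time a < D" "sderiv (T 0) f a \<noteq> 0"
  let ?a' = "a + Poly_Mapping.single (T 0) 1"
  have "f ?a' \<noteq> 0"
    using a(2) by (simp add: sderiv_def)
  moreover have "mon_weight higher_time ?a' < D"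
    using a(1) by (simp add: mon_weight_add)
  ultimately have "mon_weight sweight ?a' = d"
    using assms unfolding homog_below_def by blast
  then show "mon_weight sweight a = d + 2"
    by (simp add: mon_weight_add)
qed

lemma homog_below_sderiv_T0_iter:
  "homog_below D d f \<Longrightarrow> homog_below D (d + 2 * int i) ((sderiv (T 0) ^^ i) f)"
proof (induction i)
  case (Suc i)
  then have "homog_below D (d + 2 * int i + 2) ((sderiv (T 0) ^^ Suc i) f)"
    by (simp add: homog_below_sderiv_T0)
  then show ?case
    by (simp add: algebra_simps)
qed simp

lemma homog_below_jet:
  assumes "homog_below D (-2) w" "homog_below D (-1) rho"
  shows "homog_below D (dweight v) (jet w rho v)"
  using homog_below_sderiv_T0_iter[OF assms(1)] homog_below_sderiv_T0_iter[OF assms(2)]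
  by (cases v) (auto simp: jet_def homog_below_def svarser_def algebra_simps)

lemma weight_of_sderiv:
  assumes "homog_below D e (sderiv v f)" "v \<in> Poly_Mapping.keys a"
    and "mon_weight higher_time a < D + higher_time v" "f a \<noteq> 0"
  shows "mon_weight sweight a = e + sweight v"
proof -
  define a0 where "a0 = a - Poly_Mapping.single v 1"
  have a: "a = a0 + Poly_Mapping.single v 1"
    unfolding a0_def using diff_single_add_cancel[OF assms(2)] by simp
  have "sderiv v f a0 \<noteq> 0"
    using assms(4) unfolding a by (simp add: sderiv_def)
  moreover have "mon_weight higher_time a0 < D"
    using assms(3) unfolding a by (simp add: mon_weight_add)
  ultimately have "mon_weight sweight a0 = e"
    using assms(1) unfolding homog_below_def by blast
  then show ?thesis
    unfolding a by (simp add: mon_weight_add)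
qed

lemma homog_below_Suc:
  assumes "\<And>v. higher_time v = 1 \<Longrightarrow> homog_below D (d - sweight v) (sderiv v f)"
    and "\<And>a. \<forall>v\<in>Poly_Mapping.keys a. higher_time v = 0 \<Longrightarrow> f a \<noteq> 0 \<Longrightarrow> mon_weight sweight a = d"
  shows "homog_below (Suc D) d f"
  unfolding homog_below_def
proof (intro allI impI)
  fix a assume a: "mon_weight higher_time a < Suc D" "f a \<noteq> 0"
  show "mon_weight sweight a = d"
  proof (cases "\<forall>v\<in>Poly_Mapping.keys a. higher_time v = 0")
    case False
    then obtain v where v: "v \<in> Poly_Mapping.keys a" "higher_time v = 1"
      by (metis higher_time.elims)
    have "mon_weight sweight a = (d - sweight v) + sweight v"
      by (rule weight_of_sderiv[OF assms(1)[OF v(2)] v(1) _ a(2)]) (use a(1) v(2) in simp)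
    then show ?thesis by simp
  qed (use assms(2) a(2) in blast)
qed

lemma homog_below_flow:
  assumes "dhomog d P" "homog_below D (-2) w" "homog_below D (-1) rho"
  shows "homog_below D (d + 2) (sderiv (T 0) (seval (jet w rho) P))"
  using assms by (intro homog_below_sderiv_T0 homog_below_seval homog_below_jet)

lemma higher_time_eq_1_cases:
  assumes "higher_time v = 1"
  obtains (T) n where "v = T (Suc n)" | (S) n where "v = S n"
  using assms by (cases v rule: higher_time.cases) (auto split: if_splits simp: gr0_conv_Suc)

lemma top_solution_initial:
  assumes "is_top_solution K w rho" "\<forall>v\<in>Poly_Mapping.keys a. higher_time v = 0"
  shows "w a = (if a = Poly_Mapping.single (T 0) 1 then 1 else 0) \<and> rho a = 0"
proof -
  have "Poly_Mapping.lookup a (T (Suc n)) = 0" "Poly_Mapping.lookup a (S n) = 0" for n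
    using assms(2) by (force simp: in_keys_iff)+
  with assms(1) show ?thesis
    unfolding is_top_solution_def by blast
qed

lemma homog_below_top_solution:
  assumes K: "is_K_family K" and top: "is_top_solution K w rho"
  shows "homog_below D (-2) w \<and> homog_below D (-1) rho"
proof (induction D)
  case 0
  show ?case by (simp add: homog_below_def)
next
  case (Suc D)
  then have w: "homog_below D (-2) w" and rho: "homog_below D (-1) rho" by blast+
  have K_hom: "dhomog (-2 - 2 * int n) (K n)" for n
    using K by (rule dhomog_K)
  from top have w_flows: "\<And>n. sderiv (T n) w = sderiv (T 0) (seval (jet w rho) (K n))"
      "\<And>n. sderiv (S n) w = (\<lambda>_. 0)"
    and rho_flows: "\<And>n. sderiv (T n) rho = sderiv (T 0) (seval (jet w rho) (Rfam K n))"
      "\<And>n. sderiv (S n) rho = sderiv (T 0) (seval (jet w rho) (Qfam n))"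
    unfolding is_top_solution_def by blast+
  have "homog_below (Suc D) (-2) w"
  proof (rule homog_below_Suc)
    fix v :: svar assume "higher_time v = 1"
    then show "homog_below D (-2 - sweight v) (sderiv v w)"
    proof (cases rule: higher_time_eq_1_cases)
      case (T n)
      show ?thesis
        using homog_below_flow[OF K_hom w rho, of "Suc n"] by (simp add: T w_flows algebra_simps)
    qed (simp add: w_flows homog_below_def)
  qed (use top_solution_initial[OF top] in \<open>auto split: if_splits\<close>)
  moreover have "homog_below (Suc D) (-1) rho"
  proof (rule homog_below_Suc)
    fix v :: svar assume "higher_time v = 1"
    then show "homog_below D (-1 - sweight v) (sderiv v rho)"
    proof (cases rule: higher_time_eq_1_cases)
      case (T n)
      show ?thesis
        using homog_below_flow[OF dhomog_Rfam[OF K_hom] w rho, of "Suc n"]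
        by (simp add: T rho_flows algebra_simps)
    next
      case (S n)
      show ?thesis
        using homog_below_flow[OF dhomog_Qfam w rho, of n] by (simp add: S rho_flows algebra_simps)
    qed
  qed (use top_solution_initial[OF top] in blast)
  ultimately show ?case ..
qed

lemma eps_log_tau2_weight:
  assumes K: "is_K_family K" and top: "is_top_solution K w rho"
    and G: "is_eps_log_tau2 K w rho G" and "G a \<noteq> 0"
  shows "mon_weight sweight a = -3"
proof -
  have w: "homog_below D (-2) w" and rho: "homog_below D (-1) rho" for D
    using homog_below_top_solution[OF K top] by blast+
  have K_hom: "dhomog (-2 - 2 * int n) (K n)" for n
    using K by (rule dhomog_K)
  from G have flows: "\<And>n. sderiv (T n) G = seval (jet w rho) (Rfam K n)"
      "\<And>n. sderiv (S n) G = seval (jet w rho) (Qfam n)"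
    and normalized: "\<And>p. G (Poly_Mapping.single E p) = 0"
    unfolding is_eps_log_tau2_def by blast+
  have jets: "homog_below D (dweight v) (jet w rho v)" for D v
    using w rho by (rule homog_below_jet)
  let ?D = "Suc (mon_weight higher_time a)"
  consider (t) n where "T n \<in> Poly_Mapping.keys a" | (s) n where "S n \<in> Poly_Mapping.keys a"
    | (e) "Poly_Mapping.keys a \<subseteq> {E}"
    by (metis insertCI subsetI svar.exhaust)
  then show ?thesis
  proof cases
    case t
    have "homog_below ?D (-1 - 2 * int n) (sderiv (T n) G)"
      unfolding flows by (rule homog_below_seval[OF dhomog_Rfam[OF K_hom] jets])
    from weight_of_sderiv[OF this t _ \<open>G a \<noteq> 0\<close>] show ?thesis by simp
  next
    case s
    have "homog_below ?D (-2 - 2 * int n) (sderiv (S n) G)"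
      unfolding flows by (rule homog_below_seval[OF dhomog_Qfam jets])
    from weight_of_sderiv[OF this s _ \<open>G a \<noteq> 0\<close>] show ?thesis by simp
  next
    case e
    then have "a = Poly_Mapping.single E (Poly_Mapping.lookup a E)"
      by (intro poly_mapping_eqI) (auto simp: lookup_single when_def in_keys_iff)
    with normalized \<open>G a \<noteq> 0\<close> show ?thesis by metis
  qed
qed

lemma sum_list_affine: "(\<Sum>x\<leftarrow>xs. c * int x - d) = c * int (sum_list xs) - d * int (length xs)"
  by (induction xs) (simp_all add: algebra_simps)

theorem mainTheorem6:
  fixes K :: "nat \<Rightarrow> dpoly" and w rho G :: ser
    and p :: nat and ks ls :: "nat list"
  assumes "is_K_family K"
    and "is_top_solution K w rho"
    and "is_eps_log_tau2 K w rho G"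
    and "length ks + length ls \<ge> 1"
    and "open_corr G p ks ls \<noteq> 0"
  shows "(of_nat (sum_list ks) + of_nat (sum_list ls) - of_nat (length ks)
            - of_nat (length ls) / 2 :: rat) = 3 / 2 * (of_nat p - 1)"
proof -
  define a where "a = Poly_Mapping.single E p + (\<Sum>k\<leftarrow>ks. Poly_Mapping.single (T k) 1)
                                 + (\<Sum>l\<leftarrow>ls. Poly_Mapping.single (S l) 1)"
  have "G a \<noteq> 0"
    using assms(5) unfolding open_corr_def a_def by auto
  then have "mon_weight sweight a = -3"
    by (rule eps_log_tau2_weight[OF assms(1-3)])
  moreover have "mon_weight sweight a = -3 * int p + (2 * int (sum_list ks) - 2 * int (length ks))
      + (2 * int (sum_list ls) - 1 * int (length ls))"
    using sum_list_affine[of 2 2 ks] sum_list_affine[of 2 1 ls]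
    unfolding a_def mon_weight_add mon_weight_sum_list by (simp add: comp_def)
  ultimately have "(of_int (-3 * int p + (2 * int (sum_list ks) - 2 * int (length ks))
      + (2 * int (sum_list ls) - int (length ls))) :: rat) = -3"
    by simp
  then show ?thesis
    by (simp add: field_simps)
qed

end
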